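(* Let $W(T,Y)$ be a $W$-product of a semilattice $Y$ by a monoid $T$. Then $W(T,Y)$ is an $F$-restriction semigroup if and only if $Y$ has an identity (greatest element), if and only if $W(T,Y)$ is a monoid.
   Context: $W$-product: $T$ is a monoid acting on the left on the semilattice $Y$ (written $t*y$) by order-embeddings such that each range $t*Y$ is an order ideal of $Y$; $W(T,Y)=\{(t*y,t)\colon y\in Y,t\in T\}$ with $(t*y,t)(s*x,s)=(t*y\wedge(ts)*x,ts)$, $(t*y,t)^*=(y,1)$, $(t*y,t)^+=(t*y,1)$. It is a restriction semigroup (an algebra $(S,\cdot,{}^*,{}^+)$ satisfying $xx^*=x$, $x^*y^*=y^*x^*$, $(xy^* )^*=x^*y^*$, $x^*y=y(xy)^*$ and the duals for ${}^+$, $(x^+)^*=x^+$, $(x^* )^+=x^*$). A restriction semigroup is $F$-restriction if every class of the least congruence $\sigma$ identifying all projections $x^*$ has a maximum element in the natural partial order ($a\le b$ iff $a=eb$ for some projection $e$). *)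

theory Defs
  imports Main
begin

definition restriction_semigroup ::
  "'a set \<Rightarrow> ('a \<Rightarrow> 'a \<Rightarrow> 'a) \<Rightarrow> ('a \<Rightarrow> 'a) \<Rightarrow> ('a \<Rightarrow> 'a) \<Rightarrow> bool" where
  "restriction_semigroup S m st pl \<longleftrightarrow>
     (\<forall>x\<in>S. \<forall>y\<in>S. m x y \<in> S) \<and> (\<forall>x\<in>S. st x \<in> S) \<and> (\<forall>x\<in>S. pl x \<in> S) \<and>
     (\<forall>x\<in>S. \<forall>y\<in>S. \<forall>z\<in>S. m (m x y) z = m x (m y z)) \<and>
     (\<forall>x\<in>S. m x (st x) = x) \<and>
     (\<forall>x\<in>S. \<forall>y\<in>S. m (st x) (st y) = m (st y) (st x)) \<and>
     (\<forall>x\<in>S. \<forall>y\<in>S. st (m x (st y)) = m (st x) (st y)) \<and>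
     (\<forall>x\<in>S. \<forall>y\<in>S. m (st x) y = m y (st (m x y))) \<and>
     (\<forall>x\<in>S. m (pl x) x = x) \<and>
     (\<forall>x\<in>S. \<forall>y\<in>S. m (pl x) (pl y) = m (pl y) (pl x)) \<and>
     (\<forall>x\<in>S. \<forall>y\<in>S. pl (m (pl y) x) = m (pl y) (pl x)) \<and>
     (\<forall>x\<in>S. \<forall>y\<in>S. m y (pl x) = m (pl (m y x)) y) \<and>
     (\<forall>x\<in>S. st (pl x) = pl x) \<and>
     (\<forall>x\<in>S. pl (st x) = st x)"

definition projections :: "'a set \<Rightarrow> ('a \<Rightarrow> 'a) \<Rightarrow> 'a set" where
  "projections S st = st ` S"

definition rcongruence ::
  "'a set \<Rightarrow> ('a \<Rightarrow> 'a \<Rightarrow> 'a) \<Rightarrow> ('a \<Rightarrow> 'a) \<Rightarrow> ('a \<Rightarrow> 'a) \<Rightarrow> ('a \<times> 'a) set \<Rightarrow> bool" where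
  "rcongruence S m st pl \<rho> \<longleftrightarrow> equiv S \<rho> \<and>
     (\<forall>a b c. (a, b) \<in> \<rho> \<longrightarrow> c \<in> S \<longrightarrow> (m a c, m b c) \<in> \<rho> \<and> (m c a, m c b) \<in> \<rho>) \<and>
     (\<forall>a b. (a, b) \<in> \<rho> \<longrightarrow> (st a, st b) \<in> \<rho> \<and> (pl a, pl b) \<in> \<rho>)"

definition sigma_rel ::
  "'a set \<Rightarrow> ('a \<Rightarrow> 'a \<Rightarrow> 'a) \<Rightarrow> ('a \<Rightarrow> 'a) \<Rightarrow> ('a \<Rightarrow> 'a) \<Rightarrow> ('a \<times> 'a) set" where
  "sigma_rel S m st pl = \<Inter>{\<rho>. rcongruence S m st pl \<rho> \<and>
       projections S st \<times> projections S st \<subseteq> \<rho>}"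

definition natural_le :: "'a set \<Rightarrow> ('a \<Rightarrow> 'a \<Rightarrow> 'a) \<Rightarrow> ('a \<Rightarrow> 'a) \<Rightarrow> 'a \<Rightarrow> 'a \<Rightarrow> bool" where
  "natural_le S m st a b \<longleftrightarrow> (\<exists>e\<in>projections S st. a = m e b)"

definition F_restriction ::
  "'a set \<Rightarrow> ('a \<Rightarrow> 'a \<Rightarrow> 'a) \<Rightarrow> ('a \<Rightarrow> 'a) \<Rightarrow> ('a \<Rightarrow> 'a) \<Rightarrow> bool" where
  "F_restriction S m st pl \<longleftrightarrow> restriction_semigroup S m st pl \<and>
     (\<forall>a\<in>S. \<exists>u\<in>S. (a, u) \<in> sigma_rel S m st pl \<and>
        (\<forall>b\<in>S. (a, b) \<in> sigma_rel S m st pl \<longrightarrow> natural_le S m st b u))"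

definition is_monoid :: "'a set \<Rightarrow> ('a \<Rightarrow> 'a \<Rightarrow> 'a) \<Rightarrow> bool" where
  "is_monoid S m \<longleftrightarrow> (\<forall>x\<in>S. \<forall>y\<in>S. m x y \<in> S) \<and>
     (\<forall>x\<in>S. \<forall>y\<in>S. \<forall>z\<in>S. m (m x y) z = m x (m y z)) \<and>
     (\<exists>e\<in>S. \<forall>x\<in>S. m e x = x \<and> m x e = x)"

definition W_action :: "('t::monoid_mult \<Rightarrow> 'y::semilattice_inf \<Rightarrow> 'y) \<Rightarrow> bool" where
  "W_action act \<longleftrightarrow>
     (\<forall>y. act 1 y = y) \<and>
     (\<forall>s t y. act (s * t) y = act s (act t y)) \<and>
     (\<forall>t x y. x \<le> y \<longleftrightarrow> act t x \<le> act t y) \<and>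
     (\<forall>t x y. y \<le> act t x \<longrightarrow> (\<exists>z. y = act t z))"

definition W_set :: "('t::monoid_mult \<Rightarrow> 'y::semilattice_inf \<Rightarrow> 'y) \<Rightarrow> ('y \<times> 't) set" where
  "W_set act = {(act t y, t) | y t. True}"

text \<open>(t*y,t)(s*x,s) = (t*y \<and> (ts)*x, ts); with b = s*x we have (ts)*x = t*b.\<close>
definition W_mult :: "('t::monoid_mult \<Rightarrow> 'y::semilattice_inf \<Rightarrow> 'y) \<Rightarrow> ('y \<times> 't) \<Rightarrow> ('y \<times> 't) \<Rightarrow> ('y \<times> 't)" where
  "W_mult act p q = (inf (fst p) (act (snd p) (fst q)), snd p * snd q)"

text \<open>(t*y,t)^* = (y,1); y is unique since t acts injectively.\<close>
definition W_star :: "('t::monoid_mult \<Rightarrow> 'y::semilattice_inf \<Rightarrow> 'y) \<Rightarrow> ('y \<times> 't) \<Rightarrow> ('y \<times> 't)" where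
  "W_star act p = ((THE y. fst p = act (snd p) y), 1)"

definition W_plus :: "('t::monoid_mult \<Rightarrow> 'y::semilattice_inf \<Rightarrow> 'y) \<Rightarrow> ('y \<times> 't) \<Rightarrow> ('y \<times> 't)" where
  "W_plus act p = (fst p, 1)"

end

theory Submission
  imports Defs
begin

text \<open>The least congruence \<sigma> never relates elements with different T-components. If Y has
  a top e, then (t*y, t) = (t*y, 1)(t*e, t) and (t*e, t) = (e, 1)(t*e, t), so (t*y, t) is
  \<sigma>-related to (t*e, t), which lies above every element with T-component t: it is the
  maximum of the \<sigma>-class, and (e, 1) is an identity. Conversely, all projections (y, 1) are
  \<sigma>-related, so the first component of the maximum of their class is above every y; and the
  identity of a monoid W(T,Y) fixes every (y, 1), which forces its first component above y.\<close>

lemma W_action_one: "W_action act \<Longrightarrow> act 1 y = y"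
  unfolding W_action_def by blast

lemma W_action_mult: "W_action act \<Longrightarrow> act (s * t) y = act s (act t y)"
  unfolding W_action_def by blast

lemma W_action_le_iff: "W_action act \<Longrightarrow> act t x \<le> act t y \<longleftrightarrow> x \<le> y"
  unfolding W_action_def by blast

lemma W_action_idealE:
  assumes "W_action act" "y \<le> act t x"
  obtains z where "y = act t z"
  using assms unfolding W_action_def by blast

lemma W_action_inj: "W_action act \<Longrightarrow> act t x = act t y \<Longrightarrow> x = y"
  by (metis W_action_le_iff order_antisym order_refl)

lemma W_action_inf:
  assumes A: "W_action act"
  shows "act t (inf x z) = inf (act t x) (act t z)"
proof (rule order_antisym)
  show "act t (inf x z) \<le> inf (act t x) (act t z)"
    by (simp add: W_action_le_iff[OF A])
next
  obtain w where w: "inf (act t x) (act t z) = act t w"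
    using W_action_idealE[OF A inf.cobounded1] by metis
  then have "w \<le> inf x z"
    by (metis A W_action_le_iff le_inf_iff order_refl)
  with w show "inf (act t x) (act t z) \<le> act t (inf x z)"
    by (simp add: W_action_le_iff[OF A])
qed

lemma W_setE:
  assumes "p \<in> W_set act"
  obtains t y where "p = (act t y, t)"
  using assms unfolding W_set_def by blast

lemma act_in_W_set: "(act t y, t) \<in> W_set act"
  unfolding W_set_def by blast

lemma unit_in_W_set: "W_action act \<Longrightarrow> (y, 1) \<in> W_set act"
  by (metis act_in_W_set W_action_one)

lemma W_star_act: "W_action act \<Longrightarrow> W_star act (act t y, t) = (y, 1)"
  unfolding W_star_def by (auto intro!: the_equality dest: W_action_inj)

lemma W_star_unit: "W_action act \<Longrightarrow> W_star act (y, 1) = (y, 1)"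
  by (metis W_star_act W_action_one)

lemma W_mult_actE:
  assumes A: "W_action act"
  obtains w where "w \<le> x" "inf y (act s x) = act s w"
    and "W_mult act (act t y, t) (act s x, s) = (act (t * s) w, t * s)"
proof -
  obtain w where w: "inf y (act s x) = act s w"
    using W_action_idealE[OF A inf.cobounded2] by metis
  then have "w \<le> x"
    by (metis A W_action_le_iff inf.cobounded2)
  moreover have "W_mult act (act t y, t) (act s x, s) = (act (t * s) w, t * s)"
    unfolding W_mult_def using w by (simp add: W_action_inf[OF A, symmetric] W_action_mult[OF A])
  ultimately show thesis using that w by blast
qed

lemma W_mult_closed:
  "W_action act \<Longrightarrow> p \<in> W_set act \<Longrightarrow> q \<in> W_set act \<Longrightarrow> W_mult act p q \<in> W_set act"
  by (metis W_setE W_mult_actE act_in_W_set)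

lemma W_mult_assoc:
  "W_action act \<Longrightarrow> W_mult act (W_mult act p q) r = W_mult act p (W_mult act q r)"
  unfolding W_mult_def by (simp add: W_action_inf W_action_mult inf_assoc mult.assoc)

lemma W_star_mult_star:
  assumes A: "W_action act" and "p \<in> W_set act" "q \<in> W_set act"
  shows "W_star act (W_mult act p (W_star act q)) = W_mult act (W_star act p) (W_star act q)"
proof -
  obtain t y s x where pq: "p = (act t y, t)" "q = (act s x, s)"
    using assms(2,3) by (metis W_setE)
  have "W_mult act p (W_star act q) = (act t (inf y x), t)"
    unfolding pq W_mult_def by (simp add: W_star_act[OF A] W_action_inf[OF A])
  then show ?thesis
    unfolding pq W_mult_def by (simp add: W_star_act[OF A] W_action_one[OF A])
qed

lemma W_star_mult_left:
  assumes A: "W_action act" and "p \<in> W_set act" "q \<in> W_set act"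
  shows "W_mult act (W_star act p) q = W_mult act q (W_star act (W_mult act p q))"
proof -
  obtain t y s x where pq: "p = (act t y, t)" "q = (act s x, s)"
    using assms(2,3) by (metis W_setE)
  obtain w where "w \<le> x" and w: "inf y (act s x) = act s w"
    and m: "W_mult act p q = (act (t * s) w, t * s)"
    unfolding pq using W_mult_actE[OF A] .
  from \<open>w \<le> x\<close> have "inf (act s x) (act s w) = act s w"
    by (simp add: W_action_le_iff[OF A] inf.absorb2)
  then show ?thesis
    using w unfolding m unfolding pq W_mult_def
    by (simp add: W_star_act[OF A] W_action_one[OF A])
qed

theorem W_restriction_semigroup:
  assumes A: "W_action act"
  shows "restriction_semigroup (W_set act) (W_mult act) (W_star act) (W_plus act)"
  unfolding restriction_semigroup_def
  by (intro conjI ballI;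
      (simp add: A W_mult_closed W_mult_assoc W_star_mult_star W_star_mult_left; fail)?;
      auto elim!: W_setE simp: A W_star_act W_star_unit unit_in_W_set W_plus_def W_mult_def
        W_action_one inf_commute inf_left_commute)

lemma W_projections:
  assumes A: "W_action act"
  shows "projections (W_set act) (W_star act) = {(y, 1) | y. True}"
  unfolding projections_def
proof (intro equalityI subsetI)
  show "p \<in> {(y, 1) | y. True}" if "p \<in> W_star act ` W_set act" for p
    using that by (auto elim!: W_setE simp: W_star_act[OF A])
  show "p \<in> W_star act ` W_set act" if p_unit: "p \<in> {(y, 1) | y. True}" for p
  proof -
    obtain y where "p = (y, 1)" using p_unit by blast
    then show ?thesis using W_star_unit[OF A] unit_in_W_set[OF A] by (metis image_eqI)
  qed
qed

lemma projections_sigma_rel: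
  "e \<in> projections S st \<Longrightarrow> f \<in> projections S st \<Longrightarrow> (e, f) \<in> sigma_rel S m st pl"
  unfolding sigma_rel_def by blast

lemma sigma_rel_least:
  "rcongruence S m st pl \<rho> \<Longrightarrow> projections S st \<times> projections S st \<subseteq> \<rho>
     \<Longrightarrow> sigma_rel S m st pl \<subseteq> \<rho>"
  unfolding sigma_rel_def by blast

lemma sigma_rel_mult_projections:
  assumes "e \<in> projections S st" "f \<in> projections S st" "u \<in> S"
  shows "(m e u, m f u) \<in> sigma_rel S m st pl"
  using assms unfolding sigma_rel_def rcongruence_def by blast

lemma rcongruence_same_snd:
  assumes A: "W_action act"
  shows "rcongruence (W_set act) (W_mult act) (W_star act) (W_plus act)
           {(p, q). p \<in> W_set act \<and> q \<in> W_set act \<and> snd p = snd q}"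
proof -
  have unary_closed: "W_star act p \<in> W_set act" "W_plus act p \<in> W_set act" if "p \<in> W_set act" for p
    using that by (auto elim!: W_setE simp: A W_star_act unit_in_W_set W_plus_def)
  show ?thesis
    unfolding rcongruence_def equiv_def refl_on_def sym_def trans_def
    using W_mult_closed[OF A] unary_closed by (auto simp: W_mult_def W_star_def W_plus_def)
qed

lemma W_sigma_rel_snd:
  assumes "W_action act" "(p, q) \<in> sigma_rel (W_set act) (W_mult act) (W_star act) (W_plus act)"
  shows "snd p = snd q"
  using sigma_rel_least[OF rcongruence_same_snd[OF assms(1)]] assms
  by (fastforce simp: W_projections unit_in_W_set)

lemma W_F_restriction_if_top:
  fixes act :: "'t::monoid_mult \<Rightarrow> 'y::semilattice_inf \<Rightarrow> 'y" and e :: 'y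
  assumes A: "W_action act" and top: "\<And>y. y \<le> e"
  shows "F_restriction (W_set act) (W_mult act) (W_star act) (W_plus act)"
  unfolding F_restriction_def
proof (intro conjI W_restriction_semigroup[OF A] ballI)
  let ?\<sigma> = "sigma_rel (W_set act) (W_mult act) (W_star act) (W_plus act)"
  have below: "(act t y, t) = W_mult act (act t y, 1) (act t e, t)" for t y
    using top unfolding W_mult_def by (simp add: W_action_one[OF A] W_action_le_iff[OF A] inf.absorb1)
  fix a assume "a \<in> W_set act"
  then obtain t y where a: "a = (act t y, t)" by (rule W_setE)
  have "(W_mult act (act t y, 1) (act t e, t), W_mult act (e, 1) (act t e, t)) \<in> ?\<sigma>"
    by (rule sigma_rel_mult_projections) (auto simp: W_projections[OF A] act_in_W_set)
  moreover have "W_mult act (e, 1) (act t e, t) = (act t e, t)"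
    unfolding W_mult_def using top by (simp add: W_action_one[OF A] inf.absorb2)
  ultimately have "(a, act t e, t) \<in> ?\<sigma>"
    unfolding a using below[of t y] by metis
  moreover have "natural_le (W_set act) (W_mult act) (W_star act) b (act t e, t)"
    if "b \<in> W_set act" "(a, b) \<in> ?\<sigma>" for b
  proof -
    obtain r x where b: "b = (act r x, r)" using \<open>b \<in> W_set act\<close> by (rule W_setE)
    with that a have "r = t" using W_sigma_rel_snd[OF A] by fastforce
    then show ?thesis
      unfolding natural_le_def W_projections[OF A] using b below by blast
  qed
  ultimately show "\<exists>u\<in>W_set act. (a, u) \<in> ?\<sigma> \<and> (\<forall>b\<in>W_set act. (a, b) \<in> ?\<sigma> \<longrightarrow>
      natural_le (W_set act) (W_mult act) (W_star act) b u)"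
    using act_in_W_set by blast
qed

lemma W_top_if_F_restriction:
  fixes act :: "'t::monoid_mult \<Rightarrow> 'y::semilattice_inf \<Rightarrow> 'y"
  assumes A: "W_action act"
    and F: "F_restriction (W_set act) (W_mult act) (W_star act) (W_plus act)"
  shows "\<exists>e::'y. \<forall>y. y \<le> e"
proof -
  let ?\<sigma> = "sigma_rel (W_set act) (W_mult act) (W_star act) (W_plus act)"
  fix y0 :: 'y
  obtain u where
    max: "\<forall>b\<in>W_set act. ((y0, 1), b) \<in> ?\<sigma> \<longrightarrow> natural_le (W_set act) (W_mult act) (W_star act) b u"
    using F unfolding F_restriction_def by (meson unit_in_W_set[OF A])
  have "y \<le> fst u" for y
  proof -
    have "((y0, 1), (y, 1)) \<in> ?\<sigma>"
      by (rule projections_sigma_rel) (auto simp: W_projections[OF A])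
    with max obtain z where "(y, 1) = W_mult act (z, 1) u"
      unfolding natural_le_def W_projections[OF A] using unit_in_W_set[OF A] by blast
    then have "y = inf z (fst u)"
      unfolding W_mult_def by (simp add: W_action_one[OF A])
    then show ?thesis by simp
  qed
  then show ?thesis by blast
qed

lemma W_monoid_if_top:
  fixes act :: "'t::monoid_mult \<Rightarrow> 'y::semilattice_inf \<Rightarrow> 'y" and e :: 'y
  assumes A: "W_action act" and top: "\<And>y. y \<le> e"
  shows "is_monoid (W_set act) (W_mult act)"
proof -
  have "W_mult act (e, 1) x = x \<and> W_mult act x (e, 1) = x" if x_in: "x \<in> W_set act" for x
  proof -
    obtain t y where x: "x = (act t y, t)" using x_in by (rule W_setE)
    have "act t y \<le> act t e" by (simp add: W_action_le_iff[OF A] top)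
    then show ?thesis
      unfolding x W_mult_def using top by (simp add: W_action_one[OF A] inf.absorb1 inf.absorb2)
  qed
  then show ?thesis
    unfolding is_monoid_def
    using W_mult_closed[OF A] W_mult_assoc[OF A] unit_in_W_set[OF A] by blast
qed

lemma W_top_if_monoid:
  fixes act :: "'t::monoid_mult \<Rightarrow> 'y::semilattice_inf \<Rightarrow> 'y"
  assumes A: "W_action act" and M: "is_monoid (W_set act) (W_mult act)"
  shows "\<exists>e::'y. \<forall>y. y \<le> e"
proof -
  obtain u where id: "\<forall>x\<in>W_set act. W_mult act u x = x"
    using M unfolding is_monoid_def by blast
  have "y \<le> fst u" for y
  proof -
    have "W_mult act u (y, 1) = (y, 1)" using id unit_in_W_set[OF A] by blast
    then have "inf (fst u) (act (snd u) y) = y" and "snd u = 1"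
      unfolding W_mult_def by auto
    then show ?thesis by (metis W_action_one[OF A] inf.cobounded2 inf_commute)
  qed
  then show ?thesis by blast
qed

theorem corollary3p6:
  fixes act :: "'t::monoid_mult \<Rightarrow> 'y::semilattice_inf \<Rightarrow> 'y"
  assumes "W_action act"
  shows "(F_restriction (W_set act) (W_mult act) (W_star act) (W_plus act) \<longleftrightarrow> (\<exists>e::'y. \<forall>y. y \<le> e))
       \<and> ((\<exists>e::'y. \<forall>y. y \<le> e) \<longleftrightarrow> is_monoid (W_set act) (W_mult act))"
  using W_top_if_F_restriction[OF assms] W_F_restriction_if_top[OF assms]
    W_monoid_if_top[OF assms] W_top_if_monoid[OF assms] by blast

end
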